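(* In the D-RR setting under the nonconvex assumptions, suppose $\alpha_t=\alpha$ for all $t$ with $0<\alpha\le\frac{1}{mL}$. Then for every epoch $t$ (and every realization of the permutations), $$f(\bar x_{t+1}^0)\le f(\bar x_t^0)-\frac{\alpha m}{2}\|\nabla f(\bar x_t^0)\|^2+\frac{L^2\alpha}{n}\sum_{\ell=0}^{m-1}\|\mathbf x_t^\ell-\mathbf 1(\bar x_t^\ell)^\intercal\|^2+\alpha L^2\sum_{\ell=0}^{m-1}\|\bar x_t^\ell-\bar x_t^0\|^2 .$$
   Context: D-RR setting. Let $n,m,p\ge1$ be integers and $[k]=\{1,\dots,k\}$. For $i\in[n]$, $\ell\in[m]$ let $f_{i,\ell}:\mathbb{R}^p\to\mathbb{R}$ be differentiable; $f_i:=\frac1m\sum_{\ell=1}^m f_{i,\ell}$, $f:=\frac1n\sum_{i=1}^n f_i$. Let $W=(w_{ij})\in\mathbb{R}^{n\times n}$ be nonnegative, symmetric, with $W\mathbf 1=\mathbf 1$, compliant with an undirected connected graph on $[n]$ (for $i\ne j$, $w_{ij}>0$ iff $\{i,j\}$ is an edge); $\rho_w$ is the spectral norm of $W-\frac1n\mathbf 1\mathbf 1^\intercal$. The D-RR algorithm: given initial points $x_{i,0}\in\mathbb{R}^p$ and stepsizes $\alpha_t>0$, at each epoch $t=0,1,\dots$ each agent $i$ draws a permutation $(\pi^i_0,\dots,\pi^i_{m-1})$ of $[m]$ uniformly at random, independently across agents and epochs; sets $x^0_{i,t}=x_{i,t}$; for $\ell=0,\dots,m-1$ sets $x^{\ell+1}_{i,t}=\sum_{j=1}^n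 w_{ij}\big(x^\ell_{j,t}-\alpha_t\nabla f_{j,\pi^j_\ell}(x^\ell_{j,t})\big)$; sets $x_{i,t+1}=x^m_{i,t}$. Notation: $\mathbf{x}_t^\ell\in\mathbb{R}^{n\times p}$ has $i$-th row $(x^\ell_{i,t})^\intercal$; $\bar x_t^\ell=\frac1n\sum_i x^\ell_{i,t}$; $\mathbf 1(\bar x_t^\ell)^\intercal$ is the $n\times p$ matrix all of whose rows equal $(\bar x_t^\ell)^\intercal$; $\|\cdot\|$ is Euclidean/Frobenius norm. Nonconvex assumptions: each $f_{i,\ell}$ has $L$-Lipschitz gradient and satisfies $f_{i,\ell}\ge\bar f_{i,\ell}$ for some constant $\bar f_{i,\ell}\in\mathbb{R}$. *)

theory Defs
  imports "HOL-Analysis.Analysis"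
begin

text \<open>Agents are indexed by 0..<n, component functions by 0..<m.
  The weight matrix is W :: nat => nat => real (entries W i j for i,j < n).\<close>

definition mixing_matrix :: "nat \<Rightarrow> (nat \<Rightarrow> nat \<Rightarrow> real) \<Rightarrow> bool" where
  "mixing_matrix n W \<longleftrightarrow>
     (\<forall>i<n. \<forall>j<n. 0 \<le> W i j \<and> W i j = W j i) \<and>
     (\<forall>i<n. (\<Sum>j<n. W i j) = 1)"

definition graph_edges :: "nat \<Rightarrow> (nat \<Rightarrow> nat \<Rightarrow> real) \<Rightarrow> (nat \<times> nat) set" where
  "graph_edges n W = {(i, j). i < n \<and> j < n \<and> i \<noteq> j \<and> 0 < W i j}"

definition graph_connected :: "nat \<Rightarrow> (nat \<Rightarrow> nat \<Rightarrow> real) \<Rightarrow> bool" where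
  "graph_connected n W \<longleftrightarrow> (\<forall>i<n. \<forall>j<n. (i, j) \<in> (graph_edges n W)\<^sup>*)"

end

theory Submission
  imports Defs
begin

text \<open>Because the columns of W sum to one, the network average of the iterates follows
  plain gradient descent with the step \<open>\<alpha> m\<close> and the direction
  \<open>d = (1/m) \<Sum>\<^sub>l (1/n) \<Sum>\<^sub>j \<nabla>f\<^sub>j\<^sub>,\<^sub>\<pi>\<^sub>j\<^sub>l(x\<^sub>j\<^sup>l)\<close>,
  which, after reindexing each agent's sum by its permutation, differs from
  \<open>\<nabla>f(x\<^sub>0)\<close> only through the gaps \<open>x\<^sub>j\<^sup>l - x\<^sub>0\<close>. The descent lemma with
  \<open>\<alpha> m L \<le> 1\<close> then gives, for the next average \<open>x\<^sub>+ = x\<^sub>0 - \<alpha> m d\<close>,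
  \<open>f(x\<^sub>+) \<le> f(x\<^sub>0) - \<alpha>m/2 \<parallel>\<nabla>f(x\<^sub>0)\<parallel>\<^sup>2 + \<alpha>m/2 \<parallel>\<nabla>f(x\<^sub>0) - d\<parallel>\<^sup>2\<close>, and the last
  term is bounded by Lipschitz continuity, splitting each gap at the average
  \<open>x\<^sup>l\<close> of the same inner step.\<close>

lemma descent_lemma:
  fixes g :: "'a::real_inner \<Rightarrow> real" and G :: "'a \<Rightarrow> 'a"
  assumes deriv: "\<And>z. (g has_derivative (\<lambda>h. G z \<bullet> h)) (at z)"
    and lip: "\<And>z w. norm (G z - G w) \<le> L * norm (z - w)"
  shows "g y \<le> g x + G x \<bullet> (y - x) + L / 2 * (norm (y - x))\<^sup>2"
proof -
  define h where "h = y - x"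
  define \<phi> where "\<phi> s = g (x + s *\<^sub>R h) - s * (G x \<bullet> h) - L / 2 * s\<^sup>2 * (norm h)\<^sup>2" for s
  have \<phi>_deriv: "(\<phi> has_real_derivative
      (G (x + s *\<^sub>R h) - G x) \<bullet> h - L * s * (norm h)\<^sup>2) (at s)" for s
  proof -
    have "((\<lambda>s. x + s *\<^sub>R h) has_derivative (\<lambda>s. s *\<^sub>R h)) (at s)"
      by (auto intro!: derivative_eq_intros)
    then have "((\<lambda>s. g (x + s *\<^sub>R h)) has_real_derivative G (x + s *\<^sub>R h) \<bullet> h) (at s)"
      unfolding has_field_derivative_def
      by (rule has_derivative_eq_rhs[OF has_derivative_compose[OF _ deriv]]) (auto simp: fun_eq_iff)
    then show ?thesis
      unfolding \<phi>_def
      by (auto intro!: derivative_eq_intros simp: algebra_simps power2_eq_square inner_diff_left)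
  qed
  have "\<phi> 1 \<le> \<phi> 0"
  proof (rule DERIV_nonpos_imp_nonincreasing[of 0 1])
    fix s :: real
    assume s: "0 \<le> s" "s \<le> 1"
    have "(G (x + s *\<^sub>R h) - G x) \<bullet> h \<le> norm (G (x + s *\<^sub>R h) - G x) * norm h"
      by (rule Cauchy_Schwarz_ineq2[THEN order_trans[OF abs_ge_self]])
    also have "\<dots> \<le> L * norm (s *\<^sub>R h) * norm h"
      using lip[of "x + s *\<^sub>R h" x] by (simp add: mult_right_mono)
    also have "\<dots> = L * s * (norm h)\<^sup>2"
      using s by (simp add: power2_eq_square)
    finally show "\<exists>D. (\<phi> has_real_derivative D) (at s) \<and> D \<le> 0"
      using \<phi>_deriv by fastforce
  qed simp
  then show ?thesis
    unfolding \<phi>_def h_def by simp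
qed

lemma gradient_step_inexact_direction:
  fixes x y d G :: "'a::real_inner"
  assumes descent: "F y \<le> F x + G \<bullet> (y - x) + L / 2 * (norm (y - x))\<^sup>2"
    and y: "y = x - \<eta> *\<^sub>R d" and "0 \<le> \<eta>" and "\<eta> * L \<le> 1"
  shows "F y \<le> F x - \<eta> / 2 * (norm G)\<^sup>2 + \<eta> / 2 * (norm (G - d))\<^sup>2"
proof -
  have "L / 2 * (norm (y - x))\<^sup>2 = (\<eta> * L) * (\<eta> / 2 * (norm d)\<^sup>2)"
    using y by (simp add: power_mult_distrib power2_eq_square)
  also have "\<dots> \<le> \<eta> / 2 * (norm d)\<^sup>2"
    using mult_right_mono[OF assms(4), of "\<eta> / 2 * (norm d)\<^sup>2"] assms(3) by simp
  finally have "F y \<le> F x - \<eta> * (G \<bullet> d) + \<eta> / 2 * (norm d)\<^sup>2"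
    using descent y by simp
  moreover have "\<eta> / 2 * (norm (G - d))\<^sup>2 = \<eta> / 2 * (norm G)\<^sup>2 - \<eta> * (G \<bullet> d) + \<eta> / 2 * (norm d)\<^sup>2"
    by (simp add: power2_norm_eq_inner inner_diff_left inner_diff_right inner_commute algebra_simps)
  ultimately show ?thesis
    by linarith
qed

lemma norm_mean_power2_le:
  fixes v :: "nat \<Rightarrow> 'a::real_normed_vector"
  shows "(norm ((1 / real k) *\<^sub>R (\<Sum>i<k. v i)))\<^sup>2 \<le> (1 / real k) * (\<Sum>i<k. (norm (v i))\<^sup>2)"
proof (cases "k = 0")
  case False
  have "norm ((1 / real k) *\<^sub>R (\<Sum>i<k. v i)) \<le> (1 / real k) * (\<Sum>i<k. norm (v i))"
    by (simp add: divide_right_mono norm_sum)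
  then have "(norm ((1 / real k) *\<^sub>R (\<Sum>i<k. v i)))\<^sup>2 \<le> (1 / real k)\<^sup>2 * (\<Sum>i<k. norm (v i))\<^sup>2"
    by (metis norm_ge_zero power_mono power_mult_distrib)
  also have "\<dots> \<le> (1 / real k)\<^sup>2 * ((\<Sum>i<k. (norm (v i))\<^sup>2) * real k)"
    using sum_squared_le_sum_of_squares[of "\<lambda>i. norm (v i)" "{..<k}"]
    by (intro mult_left_mono) auto
  also have "\<dots> = (1 / real k) * (\<Sum>i<k. (norm (v i))\<^sup>2)"
    using False by (simp add: power2_eq_square)
  finally show ?thesis .
qed simp

lemma norm_double_mean_power2_le:
  fixes v :: "nat \<Rightarrow> nat \<Rightarrow> 'a::real_normed_vector"
  shows "(norm ((1 / real m) *\<^sub>R (\<Sum>l<m. (1 / real n) *\<^sub>R (\<Sum>j<n. v l j))))\<^sup>2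
    \<le> (1 / real m) * (\<Sum>l<m. (1 / real n) * (\<Sum>j<n. (norm (v l j))\<^sup>2))"
  by (rule order_trans[OF norm_mean_power2_le])
    (intro mult_left_mono sum_mono norm_mean_power2_le, simp)

lemma power2_norm_diff_le_split:
  fixes a b c :: "'a::real_normed_vector"
  assumes "0 \<le> e" and "e \<le> L * norm (a - b)"
  shows "e\<^sup>2 \<le> 2 * L\<^sup>2 * (norm (b - c))\<^sup>2 + 2 * L\<^sup>2 * (norm (c - a))\<^sup>2"
proof -
  have "(norm (a - b))\<^sup>2 \<le> (norm (b - c) + norm (c - a))\<^sup>2"
    using norm_triangle_ineq[of "b - c" "c - a"] by (intro power_mono) (simp_all add: norm_minus_commute)
  also have "\<dots> \<le> 2 * (norm (b - c))\<^sup>2 + 2 * (norm (c - a))\<^sup>2"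
    using sum_squares_bound[of "norm (b - c)" "norm (c - a)"] by (simp add: power2_sum)
  finally have "L\<^sup>2 * (norm (a - b))\<^sup>2 \<le> L\<^sup>2 * (2 * (norm (b - c))\<^sup>2 + 2 * (norm (c - a))\<^sup>2)"
    by (rule mult_left_mono) simp
  moreover have "e\<^sup>2 \<le> L\<^sup>2 * (norm (a - b))\<^sup>2"
    using power_mono[OF assms(2,1)] by (simp add: power_mult_distrib)
  ultimately show ?thesis
    by (simp add: algebra_simps)
qed

lemma norm_mean_lipschitz_error_le:
  fixes h :: "nat \<Rightarrow> nat \<Rightarrow> 'a::real_normed_vector \<Rightarrow> 'b::real_normed_vector"
  assumes lip: "\<And>l j. l < m \<Longrightarrow> j < n \<Longrightarrow> norm (h l j x - h l j (z l j)) \<le> L * norm (x - z l j)"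
  shows "(norm ((1 / real m) *\<^sub>R (\<Sum>l<m. (1 / real n) *\<^sub>R (\<Sum>j<n. h l j x - h l j (z l j)))))\<^sup>2
    \<le> 2 * L\<^sup>2 / (real m * real n) * (\<Sum>l<m. \<Sum>j<n. (norm (z l j - c l))\<^sup>2)
      + 2 * L\<^sup>2 / real m * (\<Sum>l<m. (norm (c l - x))\<^sup>2)"
proof -
  have "(\<Sum>l<m. (1 / real n) * (\<Sum>j<n. (norm (h l j x - h l j (z l j)))\<^sup>2))
      \<le> (\<Sum>l<m. (1 / real n) * (\<Sum>j<n. 2 * L\<^sup>2 * (norm (z l j - c l))\<^sup>2 + 2 * L\<^sup>2 * (norm (c l - x))\<^sup>2))"
    using lip by (intro sum_mono mult_left_mono power2_norm_diff_le_split) auto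
  also have "\<dots> \<le> 2 * L\<^sup>2 / real n * (\<Sum>l<m. \<Sum>j<n. (norm (z l j - c l))\<^sup>2)
      + 2 * L\<^sup>2 * (\<Sum>l<m. (norm (c l - x))\<^sup>2)"
    by (cases "n = 0") (simp_all add: sum.distrib sum_distrib_left algebra_simps sum_nonneg)
  finally have "(1 / real m) * (\<Sum>l<m. (1 / real n) * (\<Sum>j<n. (norm (h l j x - h l j (z l j)))\<^sup>2))
      \<le> (1 / real m) * (2 * L\<^sup>2 / real n * (\<Sum>l<m. \<Sum>j<n. (norm (z l j - c l))\<^sup>2)
        + 2 * L\<^sup>2 * (\<Sum>l<m. (norm (c l - x))\<^sup>2))"
    by (rule mult_left_mono) simp
  then show ?thesis
    using norm_double_mean_power2_le[of m n "\<lambda>l j. h l j x - h l j (z l j)"]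
    by (simp add: divide_inverse algebra_simps)
qed

lemma mean_of_descent_inequalities:
  fixes F :: "nat \<Rightarrow> nat \<Rightarrow> 'a::real_inner \<Rightarrow> real" and G :: "nat \<Rightarrow> nat \<Rightarrow> 'a"
  assumes "0 < n" and "0 < m"
    and descent: "\<And>i l. i < n \<Longrightarrow> l < m \<Longrightarrow> F i l y \<le> F i l x + G i l \<bullet> (y - x) + c"
  shows "(1 / real n) * (\<Sum>i<n. (1 / real m) * (\<Sum>l<m. F i l y))
    \<le> (1 / real n) * (\<Sum>i<n. (1 / real m) * (\<Sum>l<m. F i l x))
      + ((1 / real n) *\<^sub>R (\<Sum>i<n. (1 / real m) *\<^sub>R (\<Sum>l<m. G i l))) \<bullet> (y - x) + c"
proof -
  have "(1 / real n) * (\<Sum>i<n. (1 / real m) * (\<Sum>l<m. F i l y))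
      \<le> (1 / real n) * (\<Sum>i<n. (1 / real m) * (\<Sum>l<m. F i l x + G i l \<bullet> (y - x) + c))"
    using descent by (intro mult_left_mono sum_mono) auto
  then show ?thesis
    using assms(1,2) by (simp add: sum.distrib inner_sum_left sum_distrib_left distrib_left)
qed

lemma double_mean_reindex_perm:
  fixes v :: "nat \<Rightarrow> nat \<Rightarrow> 'a::real_vector"
  assumes "\<And>j. j < n \<Longrightarrow> bij_betw (\<pi> j) {..<m} {..<m}"
  shows "(1 / real n) *\<^sub>R (\<Sum>j<n. (1 / real m) *\<^sub>R (\<Sum>l<m. v j l))
    = (1 / real m) *\<^sub>R (\<Sum>l<m. (1 / real n) *\<^sub>R (\<Sum>j<n. v j (\<pi> j l)))"
proof -
  have "(\<Sum>l<m. v j l) = (\<Sum>l<m. v j (\<pi> j l))" if "j < n" for j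
    using sum.reindex_bij_betw[OF assms[OF that], of "v j"] by simp
  then have "(\<Sum>j<n. \<Sum>l<m. v j l) = (\<Sum>j<n. \<Sum>l<m. v j (\<pi> j l))"
    by (meson lessThan_iff sum.cong)
  also have "\<dots> = (\<Sum>l<m. \<Sum>j<n. v j (\<pi> j l))"
    by (rule sum.swap)
  finally have swapped: "(\<Sum>j<n. \<Sum>l<m. v j l) = (\<Sum>l<m. \<Sum>j<n. v j (\<pi> j l))" .
  show ?thesis
    by (simp add: swapped flip: scaleR_sum_right)
qed

lemma mixing_matrix_column_sum:
  assumes "mixing_matrix n W" and "j < n"
  shows "(\<Sum>i<n. W i j) = 1"
proof -
  have "W i j = W j i" if "i < n" for i
    using assms that unfolding mixing_matrix_def by blast
  then have "(\<Sum>i<n. W i j) = (\<Sum>i<n. W j i)"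
    by simp
  also have "\<dots> = 1"
    using assms unfolding mixing_matrix_def by blast
  finally show ?thesis .
qed

lemma sum_mixing_epoch:
  fixes X g :: "nat \<Rightarrow> nat \<Rightarrow> 'a::real_vector"
  assumes col: "\<And>j. j < n \<Longrightarrow> (\<Sum>i<n. W i j) = 1"
    and step: "\<And>l i. l < m \<Longrightarrow> i < n \<Longrightarrow>
      X (Suc l) i = (\<Sum>j<n. W i j *\<^sub>R (X l j - \<alpha> *\<^sub>R g l j))"
  shows "k \<le> m \<Longrightarrow> (\<Sum>i<n. X k i) = (\<Sum>i<n. X 0 i) - \<alpha> *\<^sub>R (\<Sum>l<k. \<Sum>j<n. g l j)"
proof (induction k)
  case (Suc k)
  have "(\<Sum>i<n. X (Suc k) i) = (\<Sum>i<n. \<Sum>j<n. W i j *\<^sub>R (X k j - \<alpha> *\<^sub>R g k j))"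
    using Suc.prems by (simp add: step)
  also have "\<dots> = (\<Sum>j<n. \<Sum>i<n. W i j *\<^sub>R (X k j - \<alpha> *\<^sub>R g k j))"
    by (rule sum.swap)
  also have "\<dots> = (\<Sum>j<n. X k j - \<alpha> *\<^sub>R g k j)"
    by (simp add: col flip: scaleR_sum_left)
  finally show ?case
    using Suc by (simp add: sum_subtractf scaleR_sum_right scaleR_add_right)
qed simp

theorem lemma13:
  fixes n m :: nat and L \<alpha> :: real
    and fs :: "nat \<Rightarrow> nat \<Rightarrow> real ^ 'p \<Rightarrow> real"
    and grad :: "nat \<Rightarrow> nat \<Rightarrow> real ^ 'p \<Rightarrow> real ^ 'p"
    and W :: "nat \<Rightarrow> nat \<Rightarrow> real"
    and \<pi> :: "nat \<Rightarrow> nat \<Rightarrow> nat \<Rightarrow> nat"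
    and X :: "nat \<Rightarrow> nat \<Rightarrow> nat \<Rightarrow> real ^ 'p"
    and t :: nat
  assumes n_pos: "1 \<le> n" and m_pos: "1 \<le> m"
    and grad: "\<And>i l x. i < n \<Longrightarrow> l < m \<Longrightarrow>
                 (fs i l has_derivative (\<lambda>h. grad i l x \<bullet> h)) (at x)"
    and lip: "\<And>i l x y. i < n \<Longrightarrow> l < m \<Longrightarrow>
                 norm (grad i l x - grad i l y) \<le> L * norm (x - y)"
    and lower: "\<And>i l. i < n \<Longrightarrow> l < m \<Longrightarrow> \<exists>c. \<forall>x. c \<le> fs i l x"
    and W_mix: "mixing_matrix n W"
    and W_conn: "graph_connected n W"
    and perm: "\<And>s i. i < n \<Longrightarrow> bij_betw (\<pi> s i) {..<m} {..<m}"
    and alpha_pos: "0 < \<alpha>" and alpha_le: "\<alpha> \<le> 1 / (real m * L)"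
    and step: "\<And>s l i. l < m \<Longrightarrow> i < n \<Longrightarrow>
                 X s (Suc l) i = (\<Sum>j<n. W i j *\<^sub>R (X s l j - \<alpha> *\<^sub>R grad j (\<pi> s j l) (X s l j)))"
    and epoch: "\<And>s i. i < n \<Longrightarrow> X (Suc s) 0 i = X s m i"
  shows
    "let f = (\<lambda>x. (1 / real n) * (\<Sum>i<n. (1 / real m) * (\<Sum>l<m. fs i l x)));
         gf = (\<lambda>x. (1 / real n) *\<^sub>R (\<Sum>i<n. (1 / real m) *\<^sub>R (\<Sum>l<m. grad i l x)));
         xbar = (\<lambda>s l. (1 / real n) *\<^sub>R (\<Sum>i<n. X s l i))
     in f (xbar (Suc t) 0)
        \<le> f (xbar t 0) - (\<alpha> * real m / 2) * (norm (gf (xbar t 0)))\<^sup>2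
           + (L\<^sup>2 * \<alpha> / real n) * (\<Sum>l<m. \<Sum>i<n. (norm (X t l i - xbar t l))\<^sup>2)
           + \<alpha> * L\<^sup>2 * (\<Sum>l<m. (norm (xbar t l - xbar t 0))\<^sup>2)"
proof -
  define f where "f = (\<lambda>x. (1 / real n) * (\<Sum>i<n. (1 / real m) * (\<Sum>l<m. fs i l x)))"
  define gf where "gf = (\<lambda>x. (1 / real n) *\<^sub>R (\<Sum>i<n. (1 / real m) *\<^sub>R (\<Sum>l<m. grad i l x)))"
  define xbar where "xbar = (\<lambda>s l. (1 / real n) *\<^sub>R (\<Sum>i<n. X s l i))"
  define x where "x = xbar t 0"
  define y where "y = xbar (Suc t) 0"
  define g where "g = (\<lambda>l j. grad j (\<pi> t j l))"
  define d where "d = (1 / real m) *\<^sub>R (\<Sum>l<m. (1 / real n) *\<^sub>R (\<Sum>j<n. g l j (X t l j)))"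
  have "0 < 1 / (real m * L)"
    using alpha_pos alpha_le by linarith
  then have step_size: "\<alpha> * real m * L \<le> 1"
    using alpha_le by (simp add: zero_less_divide_iff field_simps)
  have "(\<Sum>i<n. X t m i) = (\<Sum>i<n. X t 0 i) - \<alpha> *\<^sub>R (\<Sum>l<m. \<Sum>j<n. g l j (X t l j))"
    by (rule sum_mixing_epoch[where W = W and m = m]) (auto simp: mixing_matrix_column_sum[OF W_mix] step g_def)
  moreover have "(\<Sum>i<n. X (Suc t) 0 i) = (\<Sum>i<n. X t m i)"
    using epoch by simp
  ultimately have y_eq: "y = x - (\<alpha> * real m) *\<^sub>R d"
    using m_pos by (simp add: y_def x_def xbar_def d_def scaleR_diff_right flip: scaleR_sum_right)
  have "f y \<le> f x + gf x \<bullet> (y - x) + L / 2 * (norm (y - x))\<^sup>2"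
    unfolding f_def gf_def using n_pos m_pos
    by (intro mean_of_descent_inequalities descent_lemma[OF grad lip]) auto
  then have descent: "f y \<le> f x - (\<alpha> * real m / 2) * (norm (gf x))\<^sup>2
      + (\<alpha> * real m / 2) * (norm (gf x - d))\<^sup>2"
    using alpha_pos step_size
    by (intro gradient_step_inexact_direction[OF _ y_eq]) (auto simp: mult.assoc)
  have "gf x = (1 / real m) *\<^sub>R (\<Sum>l<m. (1 / real n) *\<^sub>R (\<Sum>j<n. g l j x))"
    unfolding gf_def g_def by (rule double_mean_reindex_perm[OF perm])
  then have "gf x - d = (1 / real m) *\<^sub>R (\<Sum>l<m. (1 / real n) *\<^sub>R (\<Sum>j<n. g l j x - g l j (X t l j)))"
    unfolding d_def
    by (simp add: sum_subtractf scaleR_diff_right)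
  also have "(norm \<dots>)\<^sup>2 \<le> 2 * L\<^sup>2 / (real m * real n) * (\<Sum>l<m. \<Sum>j<n. (norm (X t l j - xbar t l))\<^sup>2)
      + 2 * L\<^sup>2 / real m * (\<Sum>l<m. (norm (xbar t l - x))\<^sup>2)"
    using bij_betwE[OF perm] by (intro norm_mean_lipschitz_error_le) (simp add: g_def lip)
  finally have "(\<alpha> * real m / 2) * (norm (gf x - d))\<^sup>2
      \<le> (\<alpha> * real m / 2) * (2 * L\<^sup>2 / (real m * real n) * (\<Sum>l<m. \<Sum>j<n. (norm (X t l j - xbar t l))\<^sup>2)
        + 2 * L\<^sup>2 / real m * (\<Sum>l<m. (norm (xbar t l - x))\<^sup>2))"
    using alpha_pos by (intro mult_left_mono) auto
  also have "\<dots> = (L\<^sup>2 * \<alpha> / real n) * (\<Sum>l<m. \<Sum>j<n. (norm (X t l j - xbar t l))\<^sup>2)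
        + \<alpha> * L\<^sup>2 * (\<Sum>l<m. (norm (xbar t l - x))\<^sup>2)"
    using n_pos m_pos by (simp add: field_simps)
  finally have "f y \<le> f x - (\<alpha> * real m / 2) * (norm (gf x))\<^sup>2
      + (L\<^sup>2 * \<alpha> / real n) * (\<Sum>l<m. \<Sum>j<n. (norm (X t l j - xbar t l))\<^sup>2)
      + \<alpha> * L\<^sup>2 * (\<Sum>l<m. (norm (xbar t l - x))\<^sup>2)"
    using descent by linarith
  then show ?thesis
    unfolding x_def y_def by (simp only: Let_def f_def gf_def xbar_def)
qed

end
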